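(* Let $X$ be a real $n\times p$ matrix ($p<n$) of full column rank with rows $x_1^\top,\dots,x_n^\top$, let $N=\{1,\dots,n\}$, let $M\subset N$, and let $y,b^*\in\mathbb{R}^n$ and $g^*,g\in\mathbb{R}^p$ be arbitrary. Then: (i) if $|M|=k<m(X)$, then $$\|y-Xg-b^*\|_1-\|y-Xg^*-b^*\|_1\geq (2c_k-1)\|X(g-g^* )\|_1-2\sum_{i\in N\setminus M}|y_i-x_i^\top g^*-b^*_i|;$$ (ii) if $|M|=0$, then for every $b\in\mathbb{R}^n$, $$\|y-Xg-b\|_1-\|y-Xg^*-b^*\|_1\geq \|X(g-g^* )+b-b^*\|_1-2\sum_{i\in N}|y_i-b^*_i-x_i^\top g^*|.$$
   Context: For $k\in\{1,\dots,n\}$, the leverage constants of $X$ are $$c_k=c_k(X)=\min_{M\subset N,\ |M|=k}\ \min_{g\in\mathbb{R}^p,\ g\neq 0}\ \frac{\sum_{i\in N\setminus M}|x_i^\top g|}{\sum_{i\in N}|x_i^\top g|},$$ and $m(X)=\max\{k\in N : c_k(X)>1/2\}$. *)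

theory Defs
  imports "HOL-Analysis.Analysis"
begin

text \<open>Rows of X are X $ i (i :: 'n), so x_i^T g = (X $ i) \<bullet> g.
  The index set N = {1..n} is the finite type 'n (UNIV), n = CARD('n), p = CARD('p).\<close>

definition l1norm :: "real^'n \<Rightarrow> real" where
  "l1norm v = (\<Sum>i\<in>UNIV. \<bar>v $ i\<bar>)"

text \<open>Leverage constant c_k(X): outer minimum over the (finite) family of subsets M with |M| = k,
  inner minimum (attained; written as infimum) over nonzero g.\<close>
definition lev_const :: "real^'p^'n \<Rightarrow> nat \<Rightarrow> real" where
  "lev_const X k =
     Min ((\<lambda>M. Inf ((\<lambda>g. (\<Sum>i\<in>UNIV - M. \<bar>(X $ i) \<bullet> g\<bar>) / (\<Sum>i\<in>UNIV. \<bar>(X $ i) \<bullet> g\<bar>))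
                   ` {g. g \<noteq> 0}))
          ` {M. card M = k})"

text \<open>m(X) = max{k in {1..n} : c_k(X) > 1/2}; convention 0 if this set is empty.\<close>
definition m_lev :: "real^'p^'n \<Rightarrow> nat" where
  "m_lev X = (let S = {k \<in> {1..CARD('n)}. lev_const X k > 1/2} in if S = {} then 0 else Max S)"

end

theory Submission
  imports Defs
begin

text \<open>With the residual \<open>r = y - X g* - b*\<close> and \<open>v = X (g - g*)\<close>, coordinatewise
  \<open>|r_i - v_i| - |r_i| \<ge> -|v_i|\<close> on \<open>M\<close> and \<open>\<ge> |v_i| - 2 |r_i|\<close> off \<open>M\<close>. Summing, the gain
  \<open>\<parallel>r - v\<parallel>_1 - \<parallel>r\<parallel>_1\<close> is at least \<open>2 \<Sum>_{N-M} |v_i| - \<parallel>v\<parallel>_1 - 2 \<Sum>_{N-M} |r_i|\<close>, and the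
  definition of \<open>c_k\<close> gives \<open>\<Sum>_{N-M} |v_i| \<ge> c_k \<parallel>v\<parallel>_1\<close>. Part (ii) is the case \<open>M = {}\<close>
  of the same estimate, applied to \<open>v + b - b*\<close> in place of \<open>v\<close>.\<close>

lemma l1norm_diff_ge:
  fixes r v :: "real^'n" and M :: "'n set"
  shows "l1norm (r - v) - l1norm r
           \<ge> 2 * (\<Sum>i\<in>UNIV - M. \<bar>v $ i\<bar>) - l1norm v - 2 * (\<Sum>i\<in>UNIV - M. \<bar>r $ i\<bar>)"
proof -
  have split: "(\<Sum>i\<in>UNIV. f i) = (\<Sum>i\<in>UNIV - M. f i) + (\<Sum>i\<in>M. f i)" for f :: "'n \<Rightarrow> real"
    by (rule sum.subset_diff) auto
  have outside: "(\<Sum>i\<in>UNIV - M. \<bar>v $ i\<bar> - 2 * \<bar>r $ i\<bar>) \<le> (\<Sum>i\<in>UNIV - M. \<bar>r $ i - v $ i\<bar> - \<bar>r $ i\<bar>)"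
    by (rule sum_mono) auto
  have inside: "(\<Sum>i\<in>M. - \<bar>v $ i\<bar>) \<le> (\<Sum>i\<in>M. \<bar>r $ i - v $ i\<bar> - \<bar>r $ i\<bar>)"
    by (rule sum_mono) auto
  have "l1norm (r - v) - l1norm r
      = (\<Sum>i\<in>UNIV - M. \<bar>r $ i - v $ i\<bar> - \<bar>r $ i\<bar>) + (\<Sum>i\<in>M. \<bar>r $ i - v $ i\<bar> - \<bar>r $ i\<bar>)"
    unfolding l1norm_def by (simp add: split[of "\<lambda>i. \<bar>r $ i - v $ i\<bar>"] split[of "\<lambda>i. \<bar>r $ i\<bar>"] sum_subtractf)
  moreover have "l1norm v = (\<Sum>i\<in>UNIV - M. \<bar>v $ i\<bar>) + (\<Sum>i\<in>M. \<bar>v $ i\<bar>)"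
    unfolding l1norm_def by (rule split)
  ultimately show ?thesis
    using outside inside by (simp add: sum_subtractf sum_negf flip: sum_distrib_left)
qed

lemma l1norm_diff_ge_l1norm:
  fixes r v :: "real^'n"
  shows "l1norm (r - v) - l1norm r \<ge> l1norm v - 2 * l1norm r"
  using l1norm_diff_ge[where M="{}" and r=r and v=v] by (simp add: l1norm_def)

lemma lev_const_mult_le:
  fixes X :: "real^'p^'n" and M :: "'n set" and h :: "real^'p"
  shows "lev_const X (card M) * (\<Sum>i\<in>UNIV. \<bar>(X $ i) \<bullet> h\<bar>) \<le> (\<Sum>i\<in>UNIV - M. \<bar>(X $ i) \<bullet> h\<bar>)"
proof -
  define S where "S = (\<Sum>i\<in>UNIV. \<bar>(X $ i) \<bullet> h\<bar>)"
  show ?thesis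
  proof (cases "S = 0")
    case True
    then show ?thesis by (simp add: S_def sum_nonneg)
  next
    case False
    then have "h \<noteq> 0" and S_pos: "S > 0"
      unfolding S_def by (auto simp: order_less_le sum_nonneg)
    let ?ratio = "\<lambda>M. Inf ((\<lambda>g. (\<Sum>i\<in>UNIV - M. \<bar>(X $ i) \<bullet> g\<bar>) / (\<Sum>i\<in>UNIV. \<bar>(X $ i) \<bullet> g\<bar>))
                             ` {g. g \<noteq> 0})"
    have "lev_const X (card M) \<le> ?ratio M"
      unfolding lev_const_def by (rule Min_le) auto
    also have "\<dots> \<le> (\<Sum>i\<in>UNIV - M. \<bar>(X $ i) \<bullet> h\<bar>) / S"
      unfolding S_def
      by (rule cInf_lower)
        (use \<open>h \<noteq> 0\<close> in \<open>auto intro!: bdd_belowI[where m=0] divide_nonneg_nonneg sum_nonneg\<close>)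
    finally show ?thesis
      using S_pos by (simp add: S_def pos_le_divide_eq)
  qed
qed

theorem lemma3p3:
  fixes X :: "real^'p^'n" and M :: "'n set"
    and y bstar :: "real^'n" and gstar g :: "real^'p"
  assumes "CARD('p) < CARD('n)"
    and "rank X = CARD('p)"
  shows "(card M < m_lev X \<longrightarrow>
           l1norm (y - X *v g - bstar) - l1norm (y - X *v gstar - bstar)
             \<ge> (2 * lev_const X (card M) - 1) * l1norm (X *v (g - gstar))
               - 2 * (\<Sum>i\<in>UNIV - M. \<bar>y $ i - (X $ i) \<bullet> gstar - bstar $ i\<bar>))
       \<and> (card M = 0 \<longrightarrow>
           (\<forall>b :: real^'n.
              l1norm (y - X *v g - b) - l1norm (y - X *v gstar - bstar)
                \<ge> l1norm (X *v (g - gstar) + b - bstar)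
                  - 2 * (\<Sum>i\<in>UNIV. \<bar>y $ i - bstar $ i - (X $ i) \<bullet> gstar\<bar>)))"
proof (intro conjI impI allI)
  define r where "r = y - X *v gstar - bstar"
  define v where "v = X *v (g - gstar)"
  have r_minus_v: "y - X *v g - bstar = r - v"
    unfolding r_def v_def by (simp add: matrix_vector_mult_diff_distrib)
  have v_component: "\<bar>v $ i\<bar> = \<bar>(X $ i) \<bullet> (g - gstar)\<bar>" for i
    by (simp add: v_def matrix_vector_mul_component)
  have leverage: "lev_const X (card M) * l1norm v \<le> (\<Sum>i\<in>UNIV - M. \<bar>v $ i\<bar>)"
    using lev_const_mult_le[of X M "g - gstar"] by (simp add: l1norm_def v_component)
  have r_sum_outside: "(\<Sum>i\<in>UNIV - M. \<bar>y $ i - (X $ i) \<bullet> gstar - bstar $ i\<bar>)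
      = (\<Sum>i\<in>UNIV - M. \<bar>r $ i\<bar>)"
    by (simp add: r_def matrix_vector_mul_component)
  show "l1norm (y - X *v g - bstar) - l1norm (y - X *v gstar - bstar)
          \<ge> (2 * lev_const X (card M) - 1) * l1norm (X *v (g - gstar))
            - 2 * (\<Sum>i\<in>UNIV - M. \<bar>y $ i - (X $ i) \<bullet> gstar - bstar $ i\<bar>)"
    unfolding r_minus_v r_sum_outside r_def[symmetric] v_def[symmetric]
    using l1norm_diff_ge[where M=M and r=r and v=v] leverage by (simp add: algebra_simps)
  fix b :: "real^'n"
  have shifted: "y - X *v g - b = r - (v + b - bstar)"
    unfolding r_def v_def by (simp add: matrix_vector_mult_diff_distrib)
  have r_sum: "(\<Sum>i\<in>UNIV. \<bar>y $ i - bstar $ i - (X $ i) \<bullet> gstar\<bar>) = l1norm r"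
    unfolding r_def l1norm_def by (simp add: matrix_vector_mul_component algebra_simps)
  show "l1norm (y - X *v g - b) - l1norm (y - X *v gstar - bstar)
          \<ge> l1norm (X *v (g - gstar) + b - bstar)
            - 2 * (\<Sum>i\<in>UNIV. \<bar>y $ i - bstar $ i - (X $ i) \<bullet> gstar\<bar>)"
    unfolding shifted r_sum r_def[symmetric] v_def[symmetric]
    by (rule l1norm_diff_ge_l1norm)
qed

end
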